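(* Let $r,s$ be positive integers, $d=rs$, $\lambda>0$ and $0<\delta\le2/5$. Let $\theta^0\in\mathbb R^d$ be the vector with all entries $1/2$. For $k\in[s]$ let $I_k=\{(k-1)r+1,\dots,kr\}$ and let $\theta^k\in\mathbb R^d$ have entries $\theta^k_i=1/2+\delta$ for $i\in I_k$ and $\theta^k_i=1/2$ otherwise. Let $w$ be drawn uniformly at random from $\{\theta^k\}_{k\in[s]}$. Then \[ \chi^2\big(\mathbb G(w)\,\|\,\mathbb G(\theta^0)\big)\le\frac{2\lambda\delta^2r}{s}\quad\text{provided }\lambda\delta^2r\le2/5, \] and \[ \chi^2\big(\mathbb V(w)\,\|\,\mathbb V(\theta^0)\big)\le\frac{8\lambda\delta^2r}{s}\quad\text{provided }\lambda\delta^2r\le1/10. \]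
   Context: For a vector $U\in\mathbb R^d$, $\mathbb G(U)$ denotes the law of the following observations: counts $\kappa_1,\dots,\kappa_d$ i.i.d. $\mathrm{Poi}(\lambda)$, and, conditionally on them, for each $i$, $\kappa_i$ independent samples from $\mathcal N(U_i,1)$ (all independent). $\mathbb V(U)$ (for $U\in[0,1]^d$) is defined identically with $\mathrm{Ber}(U_i)$ samples in place of $\mathcal N(U_i,1)$. For a random vector $w$, $\mathbb G(w)$ (resp. $\mathbb V(w)$) denotes the mixture obtained by first drawing $w$ and then observations from $\mathbb G(w)$ (resp. $\mathbb V(w)$). $\chi^2$ denotes the chi-square divergence. *)

theory Defs
  imports "HOL-Probability.Probability"
begin

definition chi_square :: "'a measure \<Rightarrow> 'a measure \<Rightarrow> ennreal" where
  "chi_square P Q =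
     (if sets P = sets Q \<and> absolutely_continuous Q P
      then (\<integral>\<^sup>+ x. (RN_deriv Q P x)^2 \<partial>Q) - 1
      else \<infinity>)"

text \<open>The observation is the pair (kappa, Y) where Y i j is the j-th sample of
  coordinate i for j < kappa i, and the fixed filler z otherwise (unobserved).\<close>
definition poi_obs :: "real \<Rightarrow> nat \<Rightarrow> 'b measure \<Rightarrow> (nat \<Rightarrow> 'b measure) \<Rightarrow> 'b
    \<Rightarrow> ((nat \<Rightarrow> nat) \<times> (nat \<Rightarrow> nat \<Rightarrow> 'b)) measure" where
  "poi_obs lam d S D z =
     distr
       ((\<Pi>\<^sub>M i\<in>{..<d}. measure_pmf (poisson_pmf lam)) \<Otimes>\<^sub>M
        (\<Pi>\<^sub>M i\<in>{..<d}. \<Pi>\<^sub>M j\<in>(UNIV::nat set). D i))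
       ((\<Pi>\<^sub>M i\<in>{..<d}. count_space (UNIV::nat set)) \<Otimes>\<^sub>M
        (\<Pi>\<^sub>M i\<in>{..<d}. \<Pi>\<^sub>M j\<in>(UNIV::nat set). S))
       (\<lambda>(\<kappa>, X). (\<kappa>, \<lambda>i\<in>{..<d}. \<lambda>j. if j < \<kappa> i then X i j else z))"

definition G_law :: "real \<Rightarrow> nat \<Rightarrow> (nat \<Rightarrow> real)
    \<Rightarrow> ((nat \<Rightarrow> nat) \<times> (nat \<Rightarrow> nat \<Rightarrow> real)) measure" where
  "G_law lam d U = poi_obs lam d lborel (\<lambda>i. density lborel (normal_density (U i) 1)) 0"

text \<open>V(U): Bernoulli samples Ber(U_i) (valued in bool, True = 1).\<close>
definition V_law :: "real \<Rightarrow> nat \<Rightarrow> (nat \<Rightarrow> real)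
    \<Rightarrow> ((nat \<Rightarrow> nat) \<times> (nat \<Rightarrow> nat \<Rightarrow> bool)) measure" where
  "V_law lam d U = poi_obs lam d (count_space UNIV) (\<lambda>i. measure_pmf (bernoulli_pmf (U i))) False"

definition mixture :: "'c pmf \<Rightarrow> ('c \<Rightarrow> 'a measure) \<Rightarrow> 'a measure" where
  "mixture p L = measure_pmf p \<bind> L"

text \<open>theta^0 and theta^k (k = 1..s), coordinates 0-based: I_k = {(k-1)r ..< kr}.\<close>
definition theta0 :: "nat \<Rightarrow> real" where
  "theta0 i = 1/2"

definition theta :: "nat \<Rightarrow> real \<Rightarrow> nat \<Rightarrow> nat \<Rightarrow> real" where
  "theta r \<delta> k i = (if (k - 1) * r \<le> i \<and> i < k * r then 1/2 + \<delta> else 1/2)"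

end

theory Submission
  imports Defs
begin

(* Relative to the null model, each law of the Poissonized model is a density whose likelihood
   ratio is the product of the per-sample ratios L i over all coordinates i and observed samples.
   Given the counts, the expectation of the product of two such ratios factorizes into per-sample
   overlaps rho_i = E[L i * L' i]; since E[rho^N] = exp (lam (rho - 1)) for N ~ Poisson(lam), it
   equals prod_i exp (lam (rho_i - 1)).  The overlap is exp (u u') for unit Gaussians and
   1 + 4 u u' for Bernoulli laws against Ber(1/2), where u, u' are the deviations of the means
   from 1/2.  As the blocks I_k are disjoint, only the diagonal pairs of the uniform mixture
   contribute, so the chi-square divergence is exactly (exp (lam r (rho (delta^2) - 1)) - 1) / s;
   the bound exp x - 1 <= x + x^2 on [0, 1] finishes the proof. *)

section \<open>Censored samples in the Poissonized model\<close>

definition trunc_seq :: "'b \<Rightarrow> nat \<Rightarrow> (nat \<Rightarrow> 'b) \<Rightarrow> nat \<Rightarrow> 'b" where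
  "trunc_seq z n Y = (\<lambda>j. if j < n then Y j else z)"

lemma trunc_seq_restrict: "trunc_seq z n (restrict Y {..<n}) = trunc_seq z n Y"
  by (auto simp: trunc_seq_def fun_eq_iff)

lemma measurable_trunc_seq[measurable]:
  assumes "{..<n} \<subseteq> J" "z \<in> space S" "sets M = sets S"
  shows "trunc_seq z n \<in> PiM J (\<lambda>_. M) \<rightarrow>\<^sub>M PiM UNIV (\<lambda>_. S)"
proof -
  have "(\<lambda>Y. \<lambda>j\<in>UNIV. if j < n then Y j else z) \<in> PiM J (\<lambda>_. M) \<rightarrow>\<^sub>M PiM UNIV (\<lambda>_. S)"
  proof (intro measurable_restrict)
    fix j :: nat
    show "(\<lambda>Y. if j < n then Y j else z) \<in> PiM J (\<lambda>_. M) \<rightarrow>\<^sub>M S"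
      using assms measurable_component_singleton[of j J "\<lambda>_. M"]
      by (cases "j < n") (auto simp: measurable_cong_sets[OF refl assms(3)])
  qed
  moreover have "trunc_seq z n = (\<lambda>Y. \<lambda>j\<in>UNIV. if j < n then Y j else z)"
    by (auto simp: trunc_seq_def fun_eq_iff)
  ultimately show ?thesis
    by simp
qed

lemma product_prob_spaceI:
  assumes "\<And>i. prob_space (M i)"
  shows "product_prob_space M"
  using assms
  by (simp add: product_prob_space_def product_prob_space_axioms_def product_sigma_finite_def
      prob_space_imp_sigma_finite)

lemma distr_trunc_seq_PiM_UNIV:
  assumes "prob_space M" "sets M = sets S" "z \<in> space S"
  shows "distr (PiM UNIV (\<lambda>_. M)) (PiM UNIV (\<lambda>_. S)) (trunc_seq z n) =
         distr (PiM {..<n} (\<lambda>_. M)) (PiM UNIV (\<lambda>_. S)) (trunc_seq z n)"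
proof -
  interpret product_prob_space "\<lambda>_. M" UNIV
    using assms(1) by (rule product_prob_spaceI)
  have "distr (PiM {..<n} (\<lambda>_. M)) (PiM UNIV (\<lambda>_. S)) (trunc_seq z n)
      = distr (distr (PiM UNIV (\<lambda>_. M)) (PiM {..<n} (\<lambda>_. M)) (\<lambda>x. restrict x {..<n}))
              (PiM UNIV (\<lambda>_. S)) (trunc_seq z n)"
    by (simp add: distr_PiM_restrict_finite)
  also have "\<dots> = distr (PiM UNIV (\<lambda>_. M)) (PiM UNIV (\<lambda>_. S)) (\<lambda>x. trunc_seq z n (restrict x {..<n}))"
    using assms by (subst distr_distr) (auto intro!: measurable_restrict_subset simp: comp_def)
  finally show ?thesis
    by (simp add: trunc_seq_restrict)
qed

definition censor_samples :: "'b \<Rightarrow> nat \<Rightarrow> (nat \<Rightarrow> nat) \<Rightarrow> (nat \<Rightarrow> nat \<Rightarrow> 'b) \<Rightarrow> nat \<Rightarrow> nat \<Rightarrow> 'b" where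
  "censor_samples z d \<kappa> X = (\<lambda>i\<in>{..<d}. trunc_seq z (\<kappa> i) (X i))"

lemma measurable_censor_samples[measurable]:
  assumes "\<And>i. sets (D i) = sets S" "z \<in> space S"
  shows "censor_samples z d \<kappa> \<in>
    PiM {..<d} (\<lambda>i. PiM UNIV (\<lambda>_. D i)) \<rightarrow>\<^sub>M PiM {..<d} (\<lambda>i. PiM UNIV (\<lambda>_. S))"
  unfolding censor_samples_def
proof (intro measurable_restrict)
  fix i assume "i \<in> {..<d}"
  then have "(\<lambda>X. X i) \<in> PiM {..<d} (\<lambda>i. PiM UNIV (\<lambda>_. D i)) \<rightarrow>\<^sub>M PiM UNIV (\<lambda>_. D i)"
    by (rule measurable_component_singleton)
  moreover have "trunc_seq z (\<kappa> i) \<in> PiM UNIV (\<lambda>_. D i) \<rightarrow>\<^sub>M PiM UNIV (\<lambda>_. S)"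
    using assms by (intro measurable_trunc_seq) auto
  ultimately show "(\<lambda>X. trunc_seq z (\<kappa> i) (X i)) \<in>
      PiM {..<d} (\<lambda>i. PiM UNIV (\<lambda>_. D i)) \<rightarrow>\<^sub>M PiM UNIV (\<lambda>_. S)"
    by (rule measurable_compose)
qed

definition censored_law :: "nat \<Rightarrow> 'b measure \<Rightarrow> (nat \<Rightarrow> 'b measure) \<Rightarrow> 'b \<Rightarrow> (nat \<Rightarrow> nat)
    \<Rightarrow> (nat \<Rightarrow> nat \<Rightarrow> 'b) measure" where
  "censored_law d S D z \<kappa> =
     PiM {..<d} (\<lambda>i. distr (PiM {..<\<kappa> i} (\<lambda>_. D i)) (PiM UNIV (\<lambda>_. S)) (trunc_seq z (\<kappa> i)))"

lemma sets_censored_law: "sets (censored_law d S D z \<kappa>) = sets (PiM {..<d} (\<lambda>i. PiM UNIV (\<lambda>_. S)))"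
  unfolding censored_law_def by (simp cong: sets_PiM_cong)

lemma distr_censor_samples:
  assumes D: "\<And>i. prob_space (D i)" and sets_D: "\<And>i. sets (D i) = sets S" and z: "z \<in> space S"
  shows "distr (PiM {..<d} (\<lambda>i. PiM UNIV (\<lambda>_. D i))) (PiM {..<d} (\<lambda>i. PiM UNIV (\<lambda>_. S)))
           (censor_samples z d \<kappa>) = censored_law d S D z \<kappa>"
  unfolding censored_law_def
proof (rule product_sigma_finite.PiM_eqI)
  let ?B = "PiM {..<d} (\<lambda>i. PiM UNIV (\<lambda>_. D i))"
  let ?F = "\<lambda>i. distr (PiM {..<\<kappa> i} (\<lambda>_. D i)) (PiM UNIV (\<lambda>_. S)) (trunc_seq z (\<kappa> i))"
  have trunc_meas: "trunc_seq z n \<in> PiM J (\<lambda>_. D i) \<rightarrow>\<^sub>M PiM UNIV (\<lambda>_. S)" if "{..<n} \<subseteq> J" for n J i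
    using that sets_D z by (intro measurable_trunc_seq)
  interpret F: product_prob_space ?F UNIV
    using D trunc_meas by (intro product_prob_spaceI prob_space.prob_space_distr prob_space_PiM) auto
  interpret B: product_prob_space "\<lambda>i. PiM UNIV (\<lambda>_. D i)" UNIV
    using D by (intro product_prob_spaceI prob_space_PiM) auto
  show "product_sigma_finite ?F" "finite {..<d}"
    by unfold_locales simp
  show "sets (distr ?B (PiM {..<d} (\<lambda>i. PiM UNIV (\<lambda>_. S))) (censor_samples z d \<kappa>)) = sets (PiM {..<d} ?F)"
    by (simp cong: sets_PiM_cong)
  fix A assume A: "\<And>i. i \<in> {..<d} \<Longrightarrow> A i \<in> sets (?F i)"
  have "censor_samples z d \<kappa> -` PiE {..<d} A \<inter> space ?B
      = PiE {..<d} (\<lambda>i. trunc_seq z (\<kappa> i) -` A i \<inter> space (PiM UNIV (\<lambda>_. D i)))"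
    by (auto simp: censor_samples_def space_PiM PiE_def Pi_def extensional_def)
  then have "emeasure (distr ?B (PiM {..<d} (\<lambda>i. PiM UNIV (\<lambda>_. S))) (censor_samples z d \<kappa>)) (PiE {..<d} A)
      = emeasure ?B (PiE {..<d} (\<lambda>i. trunc_seq z (\<kappa> i) -` A i \<inter> space (PiM UNIV (\<lambda>_. D i))))"
    using A sets_D z by (subst emeasure_distr) (auto intro!: sets_PiM_I_finite)
  also have "\<dots> = (\<Prod>i<d. emeasure (distr (PiM UNIV (\<lambda>_. D i)) (PiM UNIV (\<lambda>_. S)) (trunc_seq z (\<kappa> i))) (A i))"
    using A trunc_meas by (subst B.emeasure_PiM) (auto intro!: measurable_sets prod.cong simp: emeasure_distr)
  also have "\<dots> = (\<Prod>i<d. emeasure (?F i) (A i))"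
    using D sets_D z by (simp add: distr_trunc_seq_PiM_UNIV)
  finally show "emeasure (distr ?B (PiM {..<d} (\<lambda>i. PiM UNIV (\<lambda>_. S))) (censor_samples z d \<kappa>)) (PiE {..<d} A)
      = (\<Prod>i\<in>{..<d}. emeasure (?F i) (A i))"
    by simp
qed

abbreviation count_vectors :: "nat \<Rightarrow> (nat \<Rightarrow> nat) set" where
  "count_vectors d \<equiv> PiE {..<d} (\<lambda>_. UNIV)"

lemma sets_PiM_poisson:
  "sets (PiM {..<d} (\<lambda>i. measure_pmf (poisson_pmf lam))) = sets (count_space (count_vectors d))"
proof -
  have "sets (PiM {..<d} (\<lambda>i. measure_pmf (poisson_pmf lam))) = sets (PiM {..<d} (\<lambda>i. count_space UNIV))"
    by (intro sets_PiM_cong) auto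
  then show ?thesis
    by (simp add: count_space_PiM_finite)
qed

lemma measurable_pair_count_vectors:
  assumes "sets M = sets (count_space (count_vectors d))"
    and "\<And>\<kappa>. \<kappa> \<in> count_vectors d \<Longrightarrow> (\<lambda>y. f (\<kappa>, y)) \<in> N \<rightarrow>\<^sub>M K"
  shows "f \<in> M \<Otimes>\<^sub>M N \<rightarrow>\<^sub>M K"
proof -
  have "f \<in> count_space (count_vectors d) \<Otimes>\<^sub>M N \<rightarrow>\<^sub>M K"
    using assms(2) by (intro measurable_pair_measure_countable1 countable_PiE) auto
  moreover have "sets (M \<Otimes>\<^sub>M N) = sets (count_space (count_vectors d) \<Otimes>\<^sub>M N)"
    using assms(1) by (intro sets_pair_measure_cong) auto
  ultimately show ?thesis
    by (simp cong: measurable_cong_sets)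
qed

lemma poi_obs_censor_samples:
  "poi_obs lam d S D z =
     distr (PiM {..<d} (\<lambda>i. measure_pmf (poisson_pmf lam)) \<Otimes>\<^sub>M PiM {..<d} (\<lambda>i. PiM UNIV (\<lambda>_. D i)))
       (count_space (count_vectors d) \<Otimes>\<^sub>M PiM {..<d} (\<lambda>i. PiM UNIV (\<lambda>_. S)))
       (\<lambda>(\<kappa>, X). (\<kappa>, censor_samples z d \<kappa> X))"
proof -
  have "PiM {..<d} (\<lambda>i. count_space UNIV) = count_space (count_vectors d)"
    by (rule count_space_PiM_finite) auto
  then show ?thesis
    unfolding poi_obs_def by (simp add: censor_samples_def trunc_seq_def)
qed

lemma sets_poi_obs:
  "sets (poi_obs lam d S D z) = sets (count_space (count_vectors d) \<Otimes>\<^sub>M PiM {..<d} (\<lambda>i. PiM UNIV (\<lambda>_. S)))"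
  unfolding poi_obs_censor_samples by simp

lemma measurable_censor_obs:
  assumes "\<And>i. sets (D i) = sets S" "z \<in> space S"
  shows "(\<lambda>(\<kappa>, X). (\<kappa>, censor_samples z d \<kappa> X)) \<in>
    PiM {..<d} (\<lambda>i. measure_pmf (poisson_pmf lam)) \<Otimes>\<^sub>M PiM {..<d} (\<lambda>i. PiM UNIV (\<lambda>_. D i)) \<rightarrow>\<^sub>M
    count_space (count_vectors d) \<Otimes>\<^sub>M PiM {..<d} (\<lambda>i. PiM UNIV (\<lambda>_. S))"
  using assms
  by (intro measurable_pair_count_vectors[OF sets_PiM_poisson]) (auto intro!: measurable_Pair)

lemma prob_space_poi_obs:
  assumes "\<And>i. prob_space (D i)" "\<And>i. sets (D i) = sets S" "z \<in> space S"
  shows "prob_space (poi_obs lam d S D z)"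
  unfolding poi_obs_censor_samples
  using assms measurable_censor_obs[OF assms(2,3)]
  by (intro prob_space.prob_space_distr prob_space_pair prob_space_PiM) (auto intro: prob_space_measure_pmf)

lemma nn_integral_poi_obs:
  assumes D: "\<And>i. prob_space (D i)" and sets_D: "\<And>i. sets (D i) = sets S" and z: "z \<in> space S"
    and g: "g \<in> borel_measurable (count_space (count_vectors d) \<Otimes>\<^sub>M PiM {..<d} (\<lambda>i. PiM UNIV (\<lambda>_. S)))"
  shows "(\<integral>\<^sup>+ x. g x \<partial>poi_obs lam d S D z) =
     (\<integral>\<^sup>+ \<kappa>. (\<integral>\<^sup>+ y. g (\<kappa>, y) \<partial>censored_law d S D z \<kappa>) \<partial>PiM {..<d} (\<lambda>i. measure_pmf (poisson_pmf lam)))"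
proof -
  let ?A = "PiM {..<d} (\<lambda>i. measure_pmf (poisson_pmf lam))"
  let ?B = "PiM {..<d} (\<lambda>i. PiM UNIV (\<lambda>_. D i))"
  let ?Y = "PiM {..<d} (\<lambda>i. PiM UNIV (\<lambda>_. S))"
  interpret B: prob_space ?B
    using D by (intro prob_space_PiM) auto
  have censor_meas: "(\<lambda>(\<kappa>, X). (\<kappa>, censor_samples z d \<kappa> X)) \<in> ?A \<Otimes>\<^sub>M ?B \<rightarrow>\<^sub>M
      count_space (count_vectors d) \<Otimes>\<^sub>M ?Y"
    using sets_D z by (rule measurable_censor_obs)
  have "(\<integral>\<^sup>+ x. g x \<partial>poi_obs lam d S D z)
      = (\<integral>\<^sup>+ x. g (case x of (\<kappa>, X) \<Rightarrow> (\<kappa>, censor_samples z d \<kappa> X)) \<partial>(?A \<Otimes>\<^sub>M ?B))"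
    unfolding poi_obs_censor_samples using censor_meas g by (intro nn_integral_distr) auto
  also have "\<dots> = (\<integral>\<^sup>+ \<kappa>. (\<integral>\<^sup>+ X. g (\<kappa>, censor_samples z d \<kappa> X) \<partial>?B) \<partial>?A)"
    using measurable_compose[OF censor_meas g] by (subst B.nn_integral_fst[symmetric]) (auto simp: split_beta')
  also have "\<dots> = (\<integral>\<^sup>+ \<kappa>. (\<integral>\<^sup>+ y. g (\<kappa>, y) \<partial>censored_law d S D z \<kappa>) \<partial>?A)"
  proof (intro nn_integral_cong)
    fix \<kappa> assume "\<kappa> \<in> space ?A"
    then have "\<kappa> \<in> count_vectors d"
      using sets_eq_imp_space_eq[OF sets_PiM_poisson] by simp
    then have "(\<integral>\<^sup>+ X. g (\<kappa>, censor_samples z d \<kappa> X) \<partial>?B)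
        = (\<integral>\<^sup>+ y. g (\<kappa>, y) \<partial>distr ?B ?Y (censor_samples z d \<kappa>))"
      using sets_D z g by (subst nn_integral_distr) (auto intro!: measurable_Pair1')
    then show "(\<integral>\<^sup>+ X. g (\<kappa>, censor_samples z d \<kappa> X) \<partial>?B) = (\<integral>\<^sup>+ y. g (\<kappa>, y) \<partial>censored_law d S D z \<kappa>)"
      by (simp add: distr_censor_samples[OF D sets_D z])
  qed
  finally show ?thesis .
qed

section \<open>Likelihood ratios\<close>

lemma PiM_density:
  assumes I: "finite I" and M: "\<And>i. prob_space (M i)" and [measurable]: "\<And>i. f i \<in> borel_measurable (M i)"
    and Mf: "\<And>i. prob_space (density (M i) (f i))"
  shows "PiM I (\<lambda>i. density (M i) (f i)) = density (PiM I M) (\<lambda>x. \<Prod>i\<in>I. f i (x i))"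
proof (rule product_sigma_finite.PiM_eqI[symmetric])
  interpret M: product_prob_space M
    using M by (rule product_prob_spaceI)
  interpret Mf: product_prob_space "\<lambda>i. density (M i) (f i)"
    using Mf by (rule product_prob_spaceI)
  show "product_sigma_finite (\<lambda>i. density (M i) (f i))"
    by unfold_locales
  show "finite I"
    by fact
  show "sets (density (PiM I M) (\<lambda>x. \<Prod>i\<in>I. f i (x i))) = sets (PiM I (\<lambda>i. density (M i) (f i)))"
    by (simp cong: sets_PiM_cong)
  fix A assume "\<And>i. i \<in> I \<Longrightarrow> A i \<in> sets (density (M i) (f i))"
  then have A: "\<And>i. i \<in> I \<Longrightarrow> A i \<in> sets (M i)"
    by simp
  have "emeasure (density (PiM I M) (\<lambda>x. \<Prod>i\<in>I. f i (x i))) (PiE I A)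
      = (\<integral>\<^sup>+ x. (\<Prod>i\<in>I. f i (x i)) * indicator (PiE I A) x \<partial>PiM I M)"
    using A I by (subst emeasure_density) (auto intro!: sets_PiM_I_finite borel_measurable_prod_ennreal)
  also have "\<dots> = (\<integral>\<^sup>+ x. (\<Prod>i\<in>I. f i (x i) * indicator (A i) (x i)) \<partial>PiM I M)"
  proof (intro nn_integral_cong)
    fix x assume "x \<in> space (PiM I M)"
    then have "indicator (PiE I A) x = (\<Prod>i\<in>I. indicator (A i) (x i) :: ennreal)"
      using I by (auto simp: space_PiM indicator_def PiE_def Pi_def prod.neutral)
    then show "(\<Prod>i\<in>I. f i (x i)) * indicator (PiE I A) x = (\<Prod>i\<in>I. f i (x i) * indicator (A i) (x i))"
      by (simp add: prod.distrib)
  qed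
  also have "\<dots> = (\<Prod>i\<in>I. \<integral>\<^sup>+ y. f i y * indicator (A i) y \<partial>M i)"
    using A I by (subst M.product_nn_integral_prod) auto
  also have "\<dots> = (\<Prod>i\<in>I. emeasure (density (M i) (f i)) (A i))"
    using A by (simp add: emeasure_density)
  finally show "emeasure (density (PiM I M) (\<lambda>x. \<Prod>i\<in>I. f i (x i))) (PiE I A)
      = (\<Prod>i\<in>I. emeasure (density (M i) (f i)) (A i))" .
qed

definition obs_lr :: "nat \<Rightarrow> (nat \<Rightarrow> 'b \<Rightarrow> ennreal) \<Rightarrow> (nat \<Rightarrow> nat) \<times> (nat \<Rightarrow> nat \<Rightarrow> 'b) \<Rightarrow> ennreal" where
  "obs_lr d L x = (\<Prod>i<d. \<Prod>j<fst x i. L i (snd x i j))"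

lemma measurable_obs_lr[measurable]:
  assumes [measurable]: "\<And>i. L i \<in> borel_measurable S"
  shows "obs_lr d L \<in> borel_measurable (count_space (count_vectors d) \<Otimes>\<^sub>M PiM {..<d} (\<lambda>i. PiM UNIV (\<lambda>_. S)))"
proof (rule measurable_pair_measure_countable1)
  fix \<kappa>
  have "(\<lambda>x. x i j) \<in> PiM {..<d} (\<lambda>i. PiM UNIV (\<lambda>_. S)) \<rightarrow>\<^sub>M S" if "i < d" for i j
  proof -
    have "(\<lambda>x. x i) \<in> PiM {..<d} (\<lambda>i. PiM UNIV (\<lambda>_. S)) \<rightarrow>\<^sub>M PiM UNIV (\<lambda>_. S)"
      using that by (intro measurable_component_singleton) simp
    then show ?thesis
      by (rule measurable_compose) (rule measurable_component_singleton, simp)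
  qed
  then show "(\<lambda>y. obs_lr d L (\<kappa>, y)) \<in> borel_measurable (PiM {..<d} (\<lambda>i. PiM UNIV (\<lambda>_. S)))"
    unfolding obs_lr_def by (auto intro!: borel_measurable_prod_ennreal measurable_compose[OF _ assms])
qed (simp add: countable_PiE)

lemma distr_trunc_seq_density:
  assumes D: "prob_space D" and sets_D: "sets D = sets S" and z: "z \<in> space S"
    and [measurable]: "L \<in> borel_measurable S" and DL: "prob_space (density D L)"
  shows "distr (PiM {..<n} (\<lambda>_. density D L)) (PiM UNIV (\<lambda>_. S)) (trunc_seq z n)
       = density (distr (PiM {..<n} (\<lambda>_. D)) (PiM UNIV (\<lambda>_. S)) (trunc_seq z n)) (\<lambda>y. \<Prod>j<n. L (y j))"
proof -
  have [measurable]: "L \<in> borel_measurable D"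
    using sets_D by (simp cong: measurable_cong_sets)
  have trunc_meas: "trunc_seq z n \<in> PiM {..<n} (\<lambda>_. D) \<rightarrow>\<^sub>M PiM UNIV (\<lambda>_. S)"
    using sets_D z by (intro measurable_trunc_seq) auto
  have "PiM {..<n} (\<lambda>_. density D L) = density (PiM {..<n} (\<lambda>_. D)) (\<lambda>x. \<Prod>j<n. L (x j))"
    using D DL by (intro PiM_density) auto
  also have "\<dots> = density (PiM {..<n} (\<lambda>_. D)) (\<lambda>x. \<Prod>j<n. L (trunc_seq z n x j))"
    by (auto simp: trunc_seq_def intro!: density_cong prod.cong)
  finally show ?thesis
    using trunc_meas by (simp add: density_distr)
qed

lemma censored_law_density:
  assumes D: "\<And>i. prob_space (D i)" and sets_D: "\<And>i. sets (D i) = sets S" and z: "z \<in> space S"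
    and L[measurable]: "\<And>i. L i \<in> borel_measurable S" and DL: "\<And>i. prob_space (density (D i) (L i))"
  shows "censored_law d S (\<lambda>i. density (D i) (L i)) z \<kappa>
       = density (censored_law d S D z \<kappa>) (\<lambda>y. obs_lr d L (\<kappa>, y))"
proof -
  let ?E = "\<lambda>i. distr (PiM {..<\<kappa> i} (\<lambda>_. D i)) (PiM UNIV (\<lambda>_. S)) (trunc_seq z (\<kappa> i))"
  have trunc_meas: "trunc_seq z n \<in> PiM {..<n} (\<lambda>_. M) \<rightarrow>\<^sub>M PiM UNIV (\<lambda>_. S)" if "sets M = sets S" for n M
    using that z by (intro measurable_trunc_seq) auto
  have E: "prob_space (?E i)" for i
    using D sets_D trunc_meas by (intro prob_space.prob_space_distr prob_space_PiM) auto
  have EL: "prob_space (density (?E i) (\<lambda>y. \<Prod>j<\<kappa> i. L i (y j)))" for i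
    using DL sets_D trunc_meas
    by (simp flip: distr_trunc_seq_density[OF D sets_D z L DL]
        add: prob_space.prob_space_distr prob_space_PiM)
  have "censored_law d S (\<lambda>i. density (D i) (L i)) z \<kappa>
      = PiM {..<d} (\<lambda>i. density (?E i) (\<lambda>y. \<Prod>j<\<kappa> i. L i (y j)))"
    unfolding censored_law_def using D sets_D z L DL by (simp add: distr_trunc_seq_density)
  also have "\<dots> = density (PiM {..<d} ?E) (\<lambda>x. \<Prod>i<d. \<Prod>j<\<kappa> i. L i (x i j))"
    using E EL by (intro PiM_density) auto
  finally show ?thesis
    by (simp add: censored_law_def obs_lr_def)
qed

lemma poi_obs_density:
  assumes D: "\<And>i. prob_space (D i)" and sets_D: "\<And>i. sets (D i) = sets S" and z: "z \<in> space S"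
    and L[measurable]: "\<And>i. L i \<in> borel_measurable S" and DL: "\<And>i. prob_space (density (D i) (L i))"
  shows "poi_obs lam d S (\<lambda>i. density (D i) (L i)) z = density (poi_obs lam d S D z) (obs_lr d L)"
proof (rule measure_eqI)
  let ?A = "PiM {..<d} (\<lambda>i. measure_pmf (poisson_pmf lam))"
  show "sets (poi_obs lam d S (\<lambda>i. density (D i) (L i)) z) = sets (density (poi_obs lam d S D z) (obs_lr d L))"
    by (simp add: sets_poi_obs)
  fix X assume "X \<in> sets (poi_obs lam d S (\<lambda>i. density (D i) (L i)) z)"
  then have X[measurable]: "X \<in> sets (count_space (count_vectors d) \<Otimes>\<^sub>M PiM {..<d} (\<lambda>i. PiM UNIV (\<lambda>_. S)))"
    by (simp add: sets_poi_obs)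
  have "emeasure (poi_obs lam d S (\<lambda>i. density (D i) (L i)) z) X
      = (\<integral>\<^sup>+ x. indicator X x \<partial>poi_obs lam d S (\<lambda>i. density (D i) (L i)) z)"
    by (simp add: sets_poi_obs)
  also have "\<dots> = (\<integral>\<^sup>+ \<kappa>. (\<integral>\<^sup>+ y. indicator X (\<kappa>, y) \<partial>censored_law d S (\<lambda>i. density (D i) (L i)) z \<kappa>) \<partial>?A)"
    using DL sets_D z by (intro nn_integral_poi_obs) auto
  also have "\<dots> = (\<integral>\<^sup>+ \<kappa>. (\<integral>\<^sup>+ y. obs_lr d L (\<kappa>, y) * indicator X (\<kappa>, y) \<partial>censored_law d S D z \<kappa>) \<partial>?A)"
  proof (intro nn_integral_cong)
    fix \<kappa> assume "\<kappa> \<in> space ?A"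
    then have "\<kappa> \<in> count_vectors d"
      using sets_eq_imp_space_eq[OF sets_PiM_poisson] by simp
    then have "(\<lambda>y. obs_lr d L (\<kappa>, y)) \<in> borel_measurable (censored_law d S D z \<kappa>)"
      "(\<lambda>y. indicator X (\<kappa>, y) :: ennreal) \<in> borel_measurable (censored_law d S D z \<kappa>)"
      by (simp_all add: measurable_cong_sets[OF sets_censored_law refl] measurable_Pair2')
    then show "(\<integral>\<^sup>+ y. indicator X (\<kappa>, y) \<partial>censored_law d S (\<lambda>i. density (D i) (L i)) z \<kappa>)
        = (\<integral>\<^sup>+ y. obs_lr d L (\<kappa>, y) * indicator X (\<kappa>, y) \<partial>censored_law d S D z \<kappa>)"
      by (simp add: censored_law_density[OF D sets_D z L DL] nn_integral_density)
  qed
  also have "\<dots> = (\<integral>\<^sup>+ x. obs_lr d L x * indicator X x \<partial>poi_obs lam d S D z)"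
    using D sets_D z by (intro nn_integral_poi_obs[symmetric]) auto
  also have "\<dots> = emeasure (density (poi_obs lam d S D z) (obs_lr d L)) X"
    by (simp add: emeasure_density sets_poi_obs measurable_cong_sets[OF sets_poi_obs refl])
  finally show "emeasure (poi_obs lam d S (\<lambda>i. density (D i) (L i)) z) X
      = emeasure (density (poi_obs lam d S D z) (obs_lr d L)) X" .
qed

lemma nn_integral_poisson_pgf:
  assumes "0 < lam" "0 \<le> t"
  shows "(\<integral>\<^sup>+ n. ennreal t ^ n \<partial>measure_pmf (poisson_pmf lam)) = ennreal (exp (lam * (t - 1)))"
proof -
  have "(\<integral>\<^sup>+ n. ennreal t ^ n \<partial>measure_pmf (poisson_pmf lam))
      = (\<Sum>n. ennreal (exp (-lam) * ((lam * t) ^ n / fact n)))"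
    unfolding nn_integral_measure_pmf nn_integral_count_space_nat using assms
    by (intro suminf_cong) (simp add: ennreal_power ennreal_mult[symmetric] power_mult_distrib field_simps)
  also have "\<dots> = ennreal (exp (-lam) * exp (lam * t))"
    using assms exp_converges[of "lam * t"]
    by (intro suminf_ennreal_eq sums_mult) (auto simp: divide_inverse_commute)
  also have "exp (-lam) * exp (lam * t) = exp (lam * (t - 1))"
    by (simp add: exp_add[symmetric] algebra_simps)
  finally show ?thesis .
qed

lemma nn_integral_censored_law_prod:
  assumes D: "\<And>i. prob_space (D i)" and sets_D: "\<And>i. sets (D i) = sets S" and z: "z \<in> space S"
    and [measurable]: "\<And>i. f i \<in> borel_measurable S"
  shows "(\<integral>\<^sup>+ y. (\<Prod>i<d. \<Prod>j<\<kappa> i. f i (y i j)) \<partial>censored_law d S D z \<kappa>) = (\<Prod>i<d. (\<integral>\<^sup>+ w. f i w \<partial>D i) ^ \<kappa> i)"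
proof -
  let ?E = "\<lambda>i. distr (PiM {..<\<kappa> i} (\<lambda>_. D i)) (PiM UNIV (\<lambda>_. S)) (trunc_seq z (\<kappa> i))"
  have trunc_meas: "trunc_seq z (\<kappa> i) \<in> PiM {..<\<kappa> i} (\<lambda>_. D i) \<rightarrow>\<^sub>M PiM UNIV (\<lambda>_. S)" for i
    using sets_D z by (intro measurable_trunc_seq) auto
  interpret E: product_prob_space ?E
    using D trunc_meas by (intro product_prob_spaceI prob_space.prob_space_distr prob_space_PiM) auto
  have "(\<integral>\<^sup>+ y. (\<Prod>i<d. \<Prod>j<\<kappa> i. f i (y i j)) \<partial>censored_law d S D z \<kappa>)
      = (\<Prod>i<d. \<integral>\<^sup>+ w. (\<Prod>j<\<kappa> i. f i (w j)) \<partial>?E i)"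
    unfolding censored_law_def by (rule E.product_nn_integral_prod) auto
  also have "\<dots> = (\<Prod>i<d. (\<integral>\<^sup>+ w. f i w \<partial>D i) ^ \<kappa> i)"
  proof (intro prod.cong refl)
    fix i
    interpret Di: product_prob_space "\<lambda>_. D i"
      using D by (rule product_prob_spaceI)
    have [measurable]: "f i \<in> borel_measurable (D i)"
      using sets_D by (simp cong: measurable_cong_sets)
    have "(\<integral>\<^sup>+ w. (\<Prod>j<\<kappa> i. f i (w j)) \<partial>?E i)
        = (\<integral>\<^sup>+ x. (\<Prod>j<\<kappa> i. f i (trunc_seq z (\<kappa> i) x j)) \<partial>PiM {..<\<kappa> i} (\<lambda>_. D i))"
      using trunc_meas by (intro nn_integral_distr) auto
    also have "\<dots> = (\<integral>\<^sup>+ x. (\<Prod>j<\<kappa> i. f i (x j)) \<partial>PiM {..<\<kappa> i} (\<lambda>_. D i))"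
      by (auto simp: trunc_seq_def intro!: nn_integral_cong prod.cong)
    also have "\<dots> = (\<integral>\<^sup>+ w. f i w \<partial>D i) ^ \<kappa> i"
      by (subst Di.product_nn_integral_prod) auto
    finally show "(\<integral>\<^sup>+ w. (\<Prod>j<\<kappa> i. f i (w j)) \<partial>?E i) = (\<integral>\<^sup>+ w. f i w \<partial>D i) ^ \<kappa> i" .
  qed
  finally show ?thesis .
qed

lemma nn_integral_obs_lr_mult:
  assumes lam: "0 < lam" and D: "\<And>i. prob_space (D i)" and sets_D: "\<And>i. sets (D i) = sets S"
    and z: "z \<in> space S" and [measurable]: "\<And>i. L i \<in> borel_measurable S" "\<And>i. L' i \<in> borel_measurable S"
    and overlap: "\<And>i. (\<integral>\<^sup>+ y. L i y * L' i y \<partial>D i) = ennreal (\<rho> i)" and \<rho>: "\<And>i. 0 \<le> \<rho> i"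
  shows "(\<integral>\<^sup>+ x. obs_lr d L x * obs_lr d L' x \<partial>poi_obs lam d S D z) = ennreal (\<Prod>i<d. exp (lam * (\<rho> i - 1)))"
proof -
  let ?A = "PiM {..<d} (\<lambda>i. measure_pmf (poisson_pmf lam))"
  interpret A: product_prob_space "\<lambda>i. measure_pmf (poisson_pmf lam)"
    by (rule product_prob_spaceI) (rule prob_space_measure_pmf)
  have "(\<integral>\<^sup>+ x. obs_lr d L x * obs_lr d L' x \<partial>poi_obs lam d S D z)
      = (\<integral>\<^sup>+ \<kappa>. (\<integral>\<^sup>+ y. obs_lr d L (\<kappa>, y) * obs_lr d L' (\<kappa>, y) \<partial>censored_law d S D z \<kappa>) \<partial>?A)"
    using D sets_D z by (intro nn_integral_poi_obs) auto
  also have "\<dots> = (\<integral>\<^sup>+ \<kappa>. (\<Prod>i<d. ennreal (\<rho> i) ^ \<kappa> i) \<partial>?A)"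
  proof (intro nn_integral_cong)
    fix \<kappa>
    have "(\<integral>\<^sup>+ y. obs_lr d L (\<kappa>, y) * obs_lr d L' (\<kappa>, y) \<partial>censored_law d S D z \<kappa>)
        = (\<integral>\<^sup>+ y. (\<Prod>i<d. \<Prod>j<\<kappa> i. L i (y i j) * L' i (y i j)) \<partial>censored_law d S D z \<kappa>)"
      by (simp add: obs_lr_def prod.distrib)
    also have "\<dots> = (\<Prod>i<d. ennreal (\<rho> i) ^ \<kappa> i)"
      using D sets_D z by (subst nn_integral_censored_law_prod) (auto simp: overlap)
    finally show "(\<integral>\<^sup>+ y. obs_lr d L (\<kappa>, y) * obs_lr d L' (\<kappa>, y) \<partial>censored_law d S D z \<kappa>)
        = (\<Prod>i<d. ennreal (\<rho> i) ^ \<kappa> i)" .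
  qed
  also have "\<dots> = (\<Prod>i<d. \<integral>\<^sup>+ n. ennreal (\<rho> i) ^ n \<partial>measure_pmf (poisson_pmf lam))"
    by (rule A.product_nn_integral_prod[where f="\<lambda>i n. ennreal (\<rho> i) ^ n"]) auto
  also have "\<dots> = ennreal (\<Prod>i<d. exp (lam * (\<rho> i - 1)))"
    using lam \<rho> by (simp add: nn_integral_poisson_pgf prod_ennreal)
  finally show ?thesis .
qed

section \<open>Chi-square divergence of a mixture\<close>

lemma chi_square_density:
  assumes "prob_space Q" and [measurable]: "f \<in> borel_measurable Q"
  shows "chi_square (density Q f) Q = (\<integral>\<^sup>+ x. (f x)\<^sup>2 \<partial>Q) - 1"
proof -
  interpret Q: prob_space Q by fact
  have "AE x in Q. f x = RN_deriv Q (density Q f) x"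
    by (rule Q.RN_deriv_unique) auto
  then have "(\<integral>\<^sup>+ x. (RN_deriv Q (density Q f) x)\<^sup>2 \<partial>Q) = (\<integral>\<^sup>+ x. (f x)\<^sup>2 \<partial>Q)"
    by (intro nn_integral_cong_AE) auto
  then show ?thesis
    unfolding chi_square_def by (simp add: absolutely_continuousI_density)
qed

lemma mixture_pmf_of_set_density:
  assumes K: "finite K" "K \<noteq> {}" and N: "\<And>k. prob_space (N k)" "\<And>k. sets (N k) = sets Q"
    and N_density: "\<And>k. k \<in> K \<Longrightarrow> N k = density Q (f k)" and [measurable]: "\<And>k. f k \<in> borel_measurable Q"
  shows "mixture (pmf_of_set K) N = density Q (\<lambda>x. (\<Sum>k\<in>K. f k x) / of_nat (card K))"
proof (rule measure_eqI)
  have N_meas: "N \<in> measure_pmf (pmf_of_set K) \<rightarrow>\<^sub>M subprob_algebra Q"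
    using N by (auto simp: space_subprob_algebra prob_space_imp_subprob_space)
  then have sets_mixture: "sets (mixture (pmf_of_set K) N) = sets Q"
    unfolding mixture_def by (subst sets_bind[where N=Q]) (auto simp: N)
  then show "sets (mixture (pmf_of_set K) N) = sets (density Q (\<lambda>x. (\<Sum>k\<in>K. f k x) / of_nat (card K)))"
    by simp
  fix X assume "X \<in> sets (mixture (pmf_of_set K) N)"
  then have X: "X \<in> sets Q"
    using sets_mixture by simp
  have "emeasure (mixture (pmf_of_set K) N) X = (\<Sum>k\<in>K. emeasure (N k) X) / of_nat (card K)"
    unfolding mixture_def using X N_meas K by (simp add: emeasure_bind nn_integral_pmf_of_set)
  also have "\<dots> = (\<integral>\<^sup>+ x. (\<Sum>k\<in>K. f k x * indicator X x) \<partial>Q) / of_nat (card K)"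
    using X by (simp add: N_density emeasure_density nn_integral_sum)
  also have "\<dots> = (\<integral>\<^sup>+ x. (\<Sum>k\<in>K. f k x) / of_nat (card K) * indicator X x \<partial>Q)"
    unfolding divide_ennreal_def using X
    by (subst nn_integral_multc[symmetric]) (auto simp: sum_distrib_left sum_distrib_right mult_ac)
  also have "\<dots> = emeasure (density Q (\<lambda>x. (\<Sum>k\<in>K. f k x) / of_nat (card K))) X"
    using X by (simp add: emeasure_density divide_ennreal_def)
  finally show "emeasure (mixture (pmf_of_set K) N) X
      = emeasure (density Q (\<lambda>x. (\<Sum>k\<in>K. f k x) / of_nat (card K))) X" .
qed

lemma chi_square_mixture_poi_obs:
  assumes lam: "0 < lam" and K: "finite K" "K \<noteq> {}"
    and D: "\<And>i. prob_space (D i)" and sets_D: "\<And>i. sets (D i) = sets S" and z: "z \<in> space S"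
    and [measurable]: "\<And>k i. L k i \<in> borel_measurable S" and DL: "\<And>k i. prob_space (density (D i) (L k i))"
    and overlap: "\<And>k k' i. (\<integral>\<^sup>+ y. L k i y * L k' i y \<partial>D i) = ennreal (\<rho> k k' i)"
    and \<rho>: "\<And>k k' i. 0 \<le> \<rho> k k' i"
  shows "chi_square (mixture (pmf_of_set K) (\<lambda>k. poi_obs lam d S (\<lambda>i. density (D i) (L k i)) z))
           (poi_obs lam d S D z)
     = ennreal ((\<Sum>k\<in>K. \<Sum>k'\<in>K. \<Prod>i<d. exp (lam * (\<rho> k k' i - 1))) / (real (card K))\<^sup>2) - 1"
proof -
  let ?Q = "poi_obs lam d S D z"
  let ?c = "ennreal (1 / real (card K))"
  have [measurable]: "obs_lr d (L k) \<in> borel_measurable ?Q" for k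
    by (simp add: measurable_cong_sets[OF sets_poi_obs refl])
  have "mixture (pmf_of_set K) (\<lambda>k. poi_obs lam d S (\<lambda>i. density (D i) (L k i)) z)
      = density ?Q (\<lambda>x. (\<Sum>k\<in>K. obs_lr d (L k) x) / of_nat (card K))"
    using K D sets_D z DL
    by (intro mixture_pmf_of_set_density) (auto intro!: prob_space_poi_obs poi_obs_density simp: sets_poi_obs)
  also have "(\<lambda>x. (\<Sum>k\<in>K. obs_lr d (L k) x) / of_nat (card K)) = (\<lambda>x. ?c * (\<Sum>k\<in>K. obs_lr d (L k) x))"
    using K by (simp add: divide_ennreal_def ennreal_of_nat_eq_real_of_nat inverse_ennreal card_gt_0_iff
        divide_inverse mult.commute)
  finally have mixture: "mixture (pmf_of_set K) (\<lambda>k. poi_obs lam d S (\<lambda>i. density (D i) (L k i)) z)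
      = density ?Q (\<lambda>x. ?c * (\<Sum>k\<in>K. obs_lr d (L k) x))" .
  have "(\<integral>\<^sup>+ x. (?c * (\<Sum>k\<in>K. obs_lr d (L k) x))\<^sup>2 \<partial>?Q)
      = (\<integral>\<^sup>+ x. ?c\<^sup>2 * (\<Sum>k\<in>K. \<Sum>k'\<in>K. obs_lr d (L k) x * obs_lr d (L k') x) \<partial>?Q)"
    unfolding power_mult_distrib by (simp only: power2_eq_square sum_product)
  also have "\<dots> = ?c\<^sup>2 * (\<Sum>k\<in>K. \<Sum>k'\<in>K. \<integral>\<^sup>+ x. obs_lr d (L k) x * obs_lr d (L k') x \<partial>?Q)"
    by (simp add: nn_integral_cmult nn_integral_sum)
  also have "\<dots> = ?c\<^sup>2 * (\<Sum>k\<in>K. \<Sum>k'\<in>K. ennreal (\<Prod>i<d. exp (lam * (\<rho> k k' i - 1))))"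
    using lam D sets_D z overlap \<rho> by (simp add: nn_integral_obs_lr_mult)
  also have "\<dots> = ennreal ((\<Sum>k\<in>K. \<Sum>k'\<in>K. \<Prod>i<d. exp (lam * (\<rho> k k' i - 1))) / (real (card K))\<^sup>2)"
    by (simp add: sum_ennreal ennreal_power ennreal_mult'[symmetric] prod_nonneg sum_nonneg power_divide)
  finally show ?thesis
    using D sets_D z by (simp add: mixture chi_square_density prob_space_poi_obs)
qed

section \<open>The block construction\<close>

lemma theta_overlap:
  "(theta r \<delta> k i - 1/2) * (theta r \<delta> k' i - 1/2) = (if k = k' \<and> i \<in> {(k - 1) * r..<k * r} then \<delta>\<^sup>2 else 0)"
proof (cases "k = k'")
  case False
  have "\<not> ((k - 1) * r \<le> i \<and> i < k * r \<and> (k' - 1) * r \<le> i \<and> i < k' * r)"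
  proof
    assume "(k - 1) * r \<le> i \<and> i < k * r \<and> (k' - 1) * r \<le> i \<and> i < k' * r"
    then have "(k - 1) * r < k' * r" "(k' - 1) * r < k * r"
      by linarith+
    then have "k - 1 < k'" "k' - 1 < k"
      by (simp_all add: mult_less_cancel2)
    then show False
      using False by linarith
  qed
  then show ?thesis
    using False by (auto simp: theta_def)
qed (simp add: theta_def power2_eq_square)

lemma prod_theta_overlap:
  fixes \<rho> :: "real \<Rightarrow> real"
  assumes "\<rho> 0 = 1" "k \<in> {1..s}"
  shows "(\<Prod>i<r * s. exp (lam * (\<rho> ((theta r \<delta> k i - 1/2) * (theta r \<delta> k' i - 1/2)) - 1)))
       = (if k = k' then exp (lam * r * (\<rho> (\<delta>\<^sup>2) - 1)) else 1)"
proof (cases "k = k'")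
  case True
  let ?B = "{(k - 1) * r..<k * r}"
  have block: "?B \<subseteq> {..<r * s}"
    using assms(2) by (auto simp: mult.commute intro: less_le_trans)
  have "(\<Prod>i<r * s. exp (lam * (\<rho> ((theta r \<delta> k i - 1/2) * (theta r \<delta> k' i - 1/2)) - 1)))
      = (\<Prod>i<r * s. if i \<in> ?B then exp (lam * (\<rho> (\<delta>\<^sup>2) - 1)) else 1)"
    using True assms(1) by (intro prod.cong) (simp_all add: theta_overlap)
  also have "\<dots> = (\<Prod>i\<in>?B. exp (lam * (\<rho> (\<delta>\<^sup>2) - 1)))"
    by (simp only: prod.inter_restrict[OF finite_lessThan, symmetric] Int_absorb1[OF block])
  also have "\<dots> = exp (lam * r * (\<rho> (\<delta>\<^sup>2) - 1))"
    using assms(2) by (simp add: diff_mult_distrib exp_of_nat_mult[symmetric] algebra_simps)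
  finally show ?thesis
    using True by simp
qed (use assms(1) in \<open>simp add: theta_overlap\<close>)

lemma block_mixture_second_moment:
  fixes \<rho> :: "real \<Rightarrow> real"
  assumes "\<rho> 0 = 1" "0 < s"
  shows "(\<Sum>k\<in>{1..s}. \<Sum>k'\<in>{1..s}. \<Prod>i<r * s. exp (lam * (\<rho> ((theta r \<delta> k i - 1/2) * (theta r \<delta> k' i - 1/2)) - 1)))
           / (real (card {1..s}))\<^sup>2
       = 1 + (exp (lam * r * (\<rho> (\<delta>\<^sup>2) - 1)) - 1) / s"
proof -
  let ?e = "exp (lam * r * (\<rho> (\<delta>\<^sup>2) - 1))"
  have "(\<Sum>k\<in>{1..s}. \<Sum>k'\<in>{1..s}. \<Prod>i<r * s. exp (lam * (\<rho> ((theta r \<delta> k i - 1/2) * (theta r \<delta> k' i - 1/2)) - 1)))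
      = (\<Sum>k\<in>{1..s}. \<Sum>k'\<in>{1..s}. 1 + (if k = k' then ?e - 1 else 0))"
    using assms(1) by (intro sum.cong refl) (simp add: prod_theta_overlap)
  also have "\<dots> = real s * real s + real s * (?e - 1)"
    by (simp add: sum.distrib distrib_left)
  finally show ?thesis
    using assms(2) by (simp add: field_simps power2_eq_square)
qed

definition normal_lr :: "real \<Rightarrow> real \<Rightarrow> real \<Rightarrow> ennreal" where
  "normal_lr c a y = ennreal (normal_density a 1 y / normal_density c 1 y)"

lemma measurable_normal_lr[measurable]: "normal_lr c a \<in> borel_measurable lborel"
  unfolding normal_lr_def by measurable

lemma density_normal_lr:
  "density (density lborel (normal_density c 1)) (normal_lr c a) = density lborel (normal_density a 1)"
proof -
  have "ennreal (normal_density c 1 y) * normal_lr c a y = ennreal (normal_density a 1 y)" for y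
    using normal_density_pos[of 1 c y] by (simp add: normal_lr_def ennreal_mult[symmetric])
  then show ?thesis
    by (simp add: density_density_eq)
qed

lemma normal_density_mult_div:
  "normal_density a 1 y * normal_density b 1 y / normal_density c 1 y
     = exp ((a - c) * (b - c)) * normal_density (a + b - c) 1 y"
proof -
  have "exp (- (y - a)\<^sup>2 / 2) * exp (- (y - b)\<^sup>2 / 2) / exp (- (y - c)\<^sup>2 / 2)
      = exp ((a - c) * (b - c)) * exp (- (y - (a + b - c))\<^sup>2 / 2)"
    unfolding exp_add[symmetric] exp_diff[symmetric] by (simp add: power2_eq_square field_simps)
  then show ?thesis
    by (simp add: normal_density_def field_simps)
qed

lemma nn_integral_normal_lr_mult:
  "(\<integral>\<^sup>+ y. normal_lr c a y * normal_lr c b y \<partial>density lborel (normal_density c 1))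
     = ennreal (exp ((a - c) * (b - c)))"
proof -
  have "ennreal (normal_density c 1 y) * (normal_lr c a y * normal_lr c b y)
      = ennreal (exp ((a - c) * (b - c))) * ennreal (normal_density (a + b - c) 1 y)" for y
    using normal_density_pos[of 1 c y] normal_density_mult_div[of a y b c]
    by (simp add: normal_lr_def ennreal_mult[symmetric] field_simps)
  moreover have "(\<integral>\<^sup>+ y. ennreal (normal_density (a + b - c) 1 y) \<partial>lborel) = 1"
    by (simp add: nn_integral_eq_integral)
  ultimately show ?thesis
    by (simp add: nn_integral_density nn_integral_cmult)
qed

definition bernoulli_lr :: "real \<Rightarrow> bool \<Rightarrow> ennreal" where
  "bernoulli_lr a y = ennreal (2 * pmf (bernoulli_pmf a) y)"

lemma density_bernoulli_lr:
  assumes "0 \<le> a" "a \<le> 1"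
  shows "density (measure_pmf (bernoulli_pmf (1/2))) (bernoulli_lr a) = measure_pmf (bernoulli_pmf a)"
proof -
  have "ennreal (pmf (bernoulli_pmf (1/2)) y) * bernoulli_lr a y = ennreal (pmf (bernoulli_pmf a) y)" for y
  proof -
    have "ennreal (pmf (bernoulli_pmf (1/2)) y) * bernoulli_lr a y
        = ennreal (pmf (bernoulli_pmf (1/2)) y * (2 * pmf (bernoulli_pmf a) y))"
      unfolding bernoulli_lr_def by (rule ennreal_mult[symmetric]) auto
    also have "pmf (bernoulli_pmf (1/2)) y * (2 * pmf (bernoulli_pmf a) y) = pmf (bernoulli_pmf a) y"
      by (cases y) simp_all
    finally show ?thesis .
  qed
  then show ?thesis
    unfolding measure_pmf_eq_density by (simp add: density_density_eq)
qed

lemma nn_integral_bernoulli_lr_mult: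
  assumes "0 \<le> a" "a \<le> 1" "0 \<le> b" "b \<le> 1"
  shows "(\<integral>\<^sup>+ y. bernoulli_lr a y * bernoulli_lr b y \<partial>measure_pmf (bernoulli_pmf (1/2)))
       = ennreal (1 + 4 * ((a - 1/2) * (b - 1/2)))"
proof -
  have "(\<integral>\<^sup>+ y. bernoulli_lr a y * bernoulli_lr b y \<partial>measure_pmf (bernoulli_pmf (1/2)))
      = ennreal (2 * a) * ennreal (2 * b) * ennreal (1/2)
        + ennreal (2 * (1 - a)) * ennreal (2 * (1 - b)) * ennreal (1/2)"
    using assms by (simp add: nn_integral_measure_pmf_finite UNIV_bool bernoulli_lr_def)
  also have "\<dots> = ennreal (2 * a * (2 * b) * (1/2) + 2 * (1 - a) * (2 * (1 - b)) * (1/2))"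
    using assms by (simp only: ennreal_mult ennreal_plus mult_nonneg_nonneg)
  also have "2 * a * (2 * b) * (1/2) + 2 * (1 - a) * (2 * (1 - b)) * (1/2) = 1 + 4 * ((a - 1/2) * (b - 1/2))"
    by (simp add: algebra_simps)
  finally show ?thesis .
qed

lemma theta_bounds: "\<bar>\<delta>\<bar> \<le> 1/2 \<Longrightarrow> 0 \<le> theta r \<delta> k i \<and> theta r \<delta> k i \<le> 1"
  by (auto simp: theta_def)

lemma chi_square_gauss_block_mixture:
  assumes "0 < lam" "0 < s"
  shows "chi_square (mixture (pmf_of_set {1..s}) (\<lambda>k. G_law lam (r * s) (theta r \<delta> k)))
           (G_law lam (r * s) theta0)
       = ennreal ((exp (lam * r * (exp (\<delta>\<^sup>2) - 1)) - 1) / s)"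
proof -
  let ?N = "\<lambda>i::nat. density lborel (normal_density (1/2) 1)"
  have "chi_square (mixture (pmf_of_set {1..s}) (\<lambda>k. G_law lam (r * s) (theta r \<delta> k)))
          (G_law lam (r * s) theta0)
      = chi_square (mixture (pmf_of_set {1..s})
          (\<lambda>k. poi_obs lam (r * s) lborel (\<lambda>i. density (?N i) (normal_lr (1/2) (theta r \<delta> k i))) 0))
          (poi_obs lam (r * s) lborel ?N 0)"
    by (simp add: G_law_def theta0_def density_normal_lr)
  also have "\<dots> = ennreal ((\<Sum>k\<in>{1..s}. \<Sum>k'\<in>{1..s}. \<Prod>i<r * s.
        exp (lam * (exp ((theta r \<delta> k i - 1/2) * (theta r \<delta> k' i - 1/2)) - 1))) / (real (card {1..s}))\<^sup>2) - 1"
    using assms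
    by (intro chi_square_mixture_poi_obs)
       (auto simp: density_normal_lr nn_integral_normal_lr_mult prob_space_normal_density)
  also have "\<dots> = ennreal (1 + (exp (lam * r * (exp (\<delta>\<^sup>2) - 1)) - 1) / s) - 1"
    using assms by (subst block_mixture_second_moment) auto
  also have "\<dots> = ennreal ((exp (lam * r * (exp (\<delta>\<^sup>2) - 1)) - 1) / s)"
    using assms by (simp add: ennreal_minus[symmetric])
  finally show ?thesis .
qed

lemma chi_square_bernoulli_block_mixture:
  assumes "0 < lam" "0 < s" "\<bar>\<delta>\<bar> \<le> 1/2"
  shows "chi_square (mixture (pmf_of_set {1..s}) (\<lambda>k. V_law lam (r * s) (theta r \<delta> k)))
           (V_law lam (r * s) theta0)
       = ennreal ((exp (4 * lam * r * \<delta>\<^sup>2) - 1) / s)"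
proof -
  let ?B = "\<lambda>i::nat. measure_pmf (bernoulli_pmf (1/2))"
  have "chi_square (mixture (pmf_of_set {1..s}) (\<lambda>k. V_law lam (r * s) (theta r \<delta> k)))
          (V_law lam (r * s) theta0)
      = chi_square (mixture (pmf_of_set {1..s})
          (\<lambda>k. poi_obs lam (r * s) (count_space UNIV)
                (\<lambda>i. density (?B i) (bernoulli_lr (theta r \<delta> k i))) False))
          (poi_obs lam (r * s) (count_space UNIV) ?B False)"
    using theta_bounds[OF assms(3)] by (simp add: V_law_def theta0_def density_bernoulli_lr)
  also have "\<dots> = ennreal ((\<Sum>k\<in>{1..s}. \<Sum>k'\<in>{1..s}. \<Prod>i<r * s.
        exp (lam * (1 + 4 * ((theta r \<delta> k i - 1/2) * (theta r \<delta> k' i - 1/2)) - 1)))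
        / (real (card {1..s}))\<^sup>2) - 1"
  proof (rule chi_square_mixture_poi_obs)
    show "(\<integral>\<^sup>+ y. bernoulli_lr (theta r \<delta> k i) y * bernoulli_lr (theta r \<delta> k' i) y \<partial>?B i)
        = ennreal (1 + 4 * ((theta r \<delta> k i - 1/2) * (theta r \<delta> k' i - 1/2)))" for k k' i
      using theta_bounds[OF assms(3)] by (intro nn_integral_bernoulli_lr_mult) auto
  qed (use assms theta_bounds[OF assms(3)] in
        \<open>auto simp: density_bernoulli_lr prob_space_measure_pmf theta_overlap\<close>)
  also have "\<dots> = ennreal (1 + (exp (4 * lam * r * \<delta>\<^sup>2) - 1) / s) - 1"
    using assms by (subst block_mixture_second_moment) (auto simp: mult_ac)
  also have "\<dots> = ennreal ((exp (4 * lam * r * \<delta>\<^sup>2) - 1) / s)"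
    using assms by (simp add: ennreal_minus[symmetric])
  finally show ?thesis .
qed

lemma exp_mult_exp_minus_one_le:
  fixes c t :: real
  assumes "0 \<le> c" "0 \<le> t" "t \<le> 4/25" "c * t \<le> 2/5"
  shows "exp (c * (exp t - 1)) - 1 \<le> 2 * c * t"
proof -
  let ?x = "c * (exp t - 1)"
  have "exp t - 1 \<le> t + t\<^sup>2"
    using assms exp_bound[of t] by simp
  also have "\<dots> \<le> 29/25 * t"
    using mult_left_mono[OF assms(3,2)] by (simp add: power2_eq_square)
  finally have "c * (exp t - 1) \<le> c * (29/25 * t)"
    using assms(1) by (rule mult_left_mono)
  then have x: "0 \<le> ?x" "?x \<le> 29/25 * (c * t)"
    using assms by simp_all
  have "exp ?x - 1 \<le> ?x * (1 + ?x)"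
    using x assms exp_bound[of ?x] by (simp add: power2_eq_square algebra_simps)
  also have "\<dots> \<le> 29/25 * (c * t) * (1 + 29/25 * 2/5)"
    by (rule mult_mono) (use x assms in auto)
  also have "\<dots> \<le> 2 * c * t"
    using assms by simp
  finally show ?thesis .
qed

lemma exp_four_mult_minus_one_le:
  fixes a :: real
  assumes "0 \<le> a" "a \<le> 1/10"
  shows "exp (4 * a) - 1 \<le> 8 * a"
  using assms exp_bound[of "4 * a"] mult_left_mono[OF assms(2,1)] by (simp add: power2_eq_square)

theorem lemma9:
  fixes r s :: nat and lam \<delta> :: real
  assumes "r > 0" and "s > 0" and "lam > 0" and "0 < \<delta>" and "\<delta> \<le> 2/5"
  defines "d \<equiv> r * s"
  shows "(lam * \<delta>^2 * r \<le> 2/5 \<longrightarrow>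
           chi_square (mixture (pmf_of_set {1..s}) (\<lambda>k. G_law lam d (theta r \<delta> k)))
                      (G_law lam d theta0)
           \<le> ennreal (2 * lam * \<delta>^2 * r / s)) \<and>
         (lam * \<delta>^2 * r \<le> 1/10 \<longrightarrow>
           chi_square (mixture (pmf_of_set {1..s}) (\<lambda>k. V_law lam d (theta r \<delta> k)))
                      (V_law lam d theta0)
           \<le> ennreal (8 * lam * \<delta>^2 * r / s))"
proof (intro conjI impI)
  assume small: "lam * \<delta>^2 * r \<le> 2/5"
  have "\<delta>\<^sup>2 \<le> (2/5)\<^sup>2"
    using assms by (intro power_mono) auto
  then have "exp (lam * r * (exp (\<delta>\<^sup>2) - 1)) - 1 \<le> 2 * (lam * r) * \<delta>\<^sup>2"
    using assms small by (intro exp_mult_exp_minus_one_le) (simp_all add: power2_eq_square mult_ac)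
  then show "chi_square (mixture (pmf_of_set {1..s}) (\<lambda>k. G_law lam d (theta r \<delta> k))) (G_law lam d theta0)
      \<le> ennreal (2 * lam * \<delta>^2 * r / s)"
    unfolding d_def using assms
    by (subst chi_square_gauss_block_mixture) (auto intro!: ennreal_leI divide_right_mono simp: mult_ac)
next
  assume small: "lam * \<delta>^2 * r \<le> 1/10"
  then have "exp (4 * lam * r * \<delta>\<^sup>2) - 1 \<le> 8 * lam * r * \<delta>\<^sup>2"
    using assms exp_four_mult_minus_one_le[of "lam * r * \<delta>\<^sup>2"] by (simp add: mult_ac)
  then show "chi_square (mixture (pmf_of_set {1..s}) (\<lambda>k. V_law lam d (theta r \<delta> k))) (V_law lam d theta0)
      \<le> ennreal (8 * lam * \<delta>^2 * r / s)"
    unfolding d_def using assms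
    by (subst chi_square_bernoulli_block_mixture) (auto intro!: ennreal_leI divide_right_mono simp: mult_ac)
qed

end
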